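(* There exist absolute constants $c_1, c_2 > 0$ with the following property. Let $m$ be a positive integer, let $X$ be a symmetric, unit-variance random variable that is super-Gaussian with parameter $\sigma > 0$, and let $b = (b_1,\dots,b_m)$ be a random vector in $\mathbb{R}^m$ with i.i.d. entries distributed as $X$. Then \[ \mathbb{P}\big(|\langle b, w\rangle| > u\big) > c_1 \exp\Big(-\frac{c_2 u^2}{2\sigma^2}\Big) \] for all $u \geq \sigma/4$ and all $w \in \mathbb{R}^m$ with $\|w\|_2 = 1$.
   Context: A random variable $X$ with $\mathbb{E}[X]=0$ and $\mathbb{E}[X^2]=1$ is super-Gaussian with parameter $\sigma>0$ if $\mathbb{P}(|\sigma g| > t) \leq \mathbb{P}(|X| > t)$ for all $t>0$, where $g$ is a standard normal random variable. *)

theory Defs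
  imports "HOL-Probability.Probability"
begin

text \<open>A real random variable is described by its law \<mu>, a probability measure on the
  Borel sets of the reals.  \<mu> is the law of a mean-zero, unit-variance variable X.\<close>
definition centered_unit_variance :: "real measure \<Rightarrow> bool" where
  "centered_unit_variance \<mu> \<longleftrightarrow>
     prob_space \<mu> \<and> sets \<mu> = sets borel \<and>
     integrable \<mu> (\<lambda>x. x) \<and> (\<integral>x. x \<partial>\<mu>) = 0 \<and>
     integrable \<mu> (\<lambda>x. x^2) \<and> (\<integral>x. x^2 \<partial>\<mu>) = 1"

definition symmetric_law :: "real measure \<Rightarrow> bool" where
  "symmetric_law \<mu> \<longleftrightarrow> distr \<mu> borel uminus = \<mu>"

definition super_gaussian :: "real measure \<Rightarrow> real \<Rightarrow> bool" where
  "super_gaussian \<mu> \<sigma> \<longleftrightarrow> centered_unit_variance \<mu> \<and> \<sigma> > 0 \<and>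
     (\<forall>t>0. measure (density lborel std_normal_density) {g. \<bar>\<sigma> * g\<bar> > t}
             \<le> measure \<mu> {x. \<bar>x\<bar> > t})"

end

theory Submission
  imports Defs
begin

text \<open>Couple the i.i.d. vector b with an i.i.d. vector g of centered normals of standard
  deviation \<sigma> through the quantile transforms of common uniform variables: as both laws are
  symmetric and the tails of g are lighter, |g_i| \<le> |b_i| coordinatewise. Both vectors are
  invariant under sign flips of the coordinates, so the contraction principle for Rademacher sums
  (Abel summation and Levy's reflection principle) gives
  P(|<g, w>| > u) \<le> 2 P(|<b, w>| > u). For a unit vector w, <g, w> is again centered normal with
  standard deviation \<sigma>, whose tail beyond u is at least exp(-u^2/\<sigma>^2) / 9. Hence the
  constants c1 = 1/20 and c2 = 2 work, for every u \<ge> 0.\<close>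

section \<open>Contraction principle for Rademacher sums\<close>

lemma sum_mult_eq_integral_level_sums:
  fixes \<theta> z :: "'a \<Rightarrow> real"
  assumes "finite I" and "\<And>i. i \<in> I \<Longrightarrow> 0 \<le> \<theta> i"
  shows "(\<Sum>i\<in>I. \<theta> i * z i) = (\<integral>t. (\<Sum>i\<in>I. z i * indicator {0<..\<theta> i} t) \<partial>lborel)"
proof -
  have "(\<Sum>i\<in>I. \<theta> i * z i) = (\<Sum>i\<in>I. \<integral>t. z i * indicator {0<..\<theta> i} t \<partial>lborel)"
    using assms(2) by (intro sum.cong refl) (simp add: integral_indicator)
  also have "\<dots> = (\<integral>t. (\<Sum>i\<in>I. z i * indicator {0<..\<theta> i} t) \<partial>lborel)"
    using assms(2) by (intro Bochner_Integration.integral_sum[symmetric]) auto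
  finally show ?thesis .
qed

lemma abs_sum_mult_le_level_sums:
  fixes \<theta> z :: "'a \<Rightarrow> real"
  assumes fin: "finite I" and \<theta>: "\<And>i. i \<in> I \<Longrightarrow> 0 \<le> \<theta> i \<and> \<theta> i \<le> 1" and "0 \<le> u"
    and levels: "\<And>t. t \<in> \<theta> ` I \<Longrightarrow> 0 < t \<Longrightarrow> \<bar>\<Sum>i | i \<in> I \<and> t \<le> \<theta> i. z i\<bar> \<le> u"
  shows "\<bar>\<Sum>i\<in>I. \<theta> i * z i\<bar> \<le> u"
proof -
  define f where "f t = (\<Sum>i\<in>I. z i * indicator {0<..\<theta> i} t)" for t :: real
  have f_bound: "\<bar>f t\<bar> \<le> u * indicator {0<..1} t" for t
  proof (cases "t \<in> {0<..1} \<and> (\<exists>i\<in>I. t \<le> \<theta> i)")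
    case False
    then have "f t = 0"
      unfolding f_def using \<theta> by (intro sum.neutral) (force simp: indicator_def)
    then show ?thesis using \<open>0 \<le> u\<close> by (simp add: indicator_def)
  next
    case True
    define K where "K = {i \<in> I. t \<le> \<theta> i}"
    define s where "s = Min (\<theta> ` K)"
    have "finite K" "K \<noteq> {}" using fin True by (auto simp: K_def)
    then have "s \<in> \<theta> ` K" and "t \<le> s" unfolding s_def by (auto simp: K_def)
    moreover have "{i \<in> I. s \<le> \<theta> i} = K"
      using \<open>finite K\<close> \<open>t \<le> s\<close> by (auto simp: s_def K_def)
    moreover have "f t = (\<Sum>i\<in>K. z i)"
      unfolding f_def K_def using True fin
      by (simp add: indicator_def sum.inter_filter[symmetric] Int_def)
    ultimately show ?thesis
      using levels[of s] True by (auto simp: K_def)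
  qed
  have "integrable lborel f"
    unfolding f_def using \<theta> by auto
  have "\<bar>\<Sum>i\<in>I. \<theta> i * z i\<bar> = \<bar>integral\<^sup>L lborel f\<bar>"
    unfolding f_def using \<theta> by (subst sum_mult_eq_integral_level_sums[OF fin]) auto
  also have "\<dots> \<le> (\<integral>t. u * indicator {0<..1::real} t \<partial>lborel)"
    by (rule integral_abs_bound_integral[OF \<open>integrable lborel f\<close>]) (use f_bound in auto)
  also have "\<dots> = u" by simp
  finally show ?thesis .
qed

definition sign_vectors :: "'a set \<Rightarrow> ('a \<Rightarrow> real) set" where
  "sign_vectors I = I \<rightarrow>\<^sub>E {-1, 1}"

definition sign_tail_count :: "'a set \<Rightarrow> real \<Rightarrow> ('a \<Rightarrow> real) \<Rightarrow> nat" where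
  "sign_tail_count I u x = card {e \<in> sign_vectors I. u < \<bar>\<Sum>i\<in>I. e i * x i\<bar>}"

lemma finite_sign_vectors: "finite I \<Longrightarrow> finite (sign_vectors I)"
  unfolding sign_vectors_def by (intro finite_PiE) auto

lemma sign_vectors_nonempty: "sign_vectors I \<noteq> {}"
  unfolding sign_vectors_def by (auto simp: PiE_eq_empty_iff)

lemma sign_tail_count_eq_sum:
  "finite I \<Longrightarrow> real (sign_tail_count I u x) = (\<Sum>e\<in>sign_vectors I. of_bool (u < \<bar>\<Sum>i\<in>I. e i * x i\<bar>))"
  by (simp add: sign_tail_count_def finite_sign_vectors Collect_conj_eq Int_commute)

lemma sign_tail_count_cong:
  "(\<And>i. i \<in> I \<Longrightarrow> x i = y i) \<Longrightarrow> sign_tail_count I u x = sign_tail_count I u y"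
  unfolding sign_tail_count_def by (metis (no_types, lifting) sum.cong)

lemma sign_tail_count_flip:
  assumes s: "\<And>i. i \<in> I \<Longrightarrow> s i \<in> {-1, 1}"
  shows "sign_tail_count I u (\<lambda>i. s i * x i) = sign_tail_count I u x"
proof -
  define g where "g e = (\<lambda>i\<in>I. s i * e i)" for e :: "'a \<Rightarrow> real"
  have g_sign: "g e \<in> sign_vectors I" if "e \<in> sign_vectors I" for e
    using that s unfolding g_def sign_vectors_def by (force simp: PiE_iff)
  have g_inv: "g (g e) = e" if "e \<in> sign_vectors I" for e
    using that s unfolding g_def sign_vectors_def
    by (fastforce simp: PiE_iff extensional_def fun_eq_iff)
  have g_sum: "(\<Sum>i\<in>I. g e i * x i) = (\<Sum>i\<in>I. e i * (s i * x i))" for e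
    unfolding g_def by (intro sum.cong) auto
  have "bij_betw g {e \<in> sign_vectors I. u < \<bar>\<Sum>i\<in>I. e i * (s i * x i)\<bar>}
                   {e \<in> sign_vectors I. u < \<bar>\<Sum>i\<in>I. e i * x i\<bar>}"
    by (rule bij_betw_byWitness[where f' = g]) (use g_sign g_inv g_sum in \<open>auto, metis\<close>)
  then show ?thesis unfolding sign_tail_count_def by (rule bij_betw_same_card)
qed

lemma sign_tail_count_abs: "sign_tail_count I u (\<lambda>i. \<bar>x i\<bar>) = sign_tail_count I u x"
proof -
  define s where "s i = (if x i < 0 then -1 else 1 :: real)" for i
  have "(\<lambda>i. s i * x i) = (\<lambda>i. \<bar>x i\<bar>)" by (auto simp: s_def fun_eq_iff)
  then show ?thesis using sign_tail_count_flip[of I s u x] by (simp add: s_def)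
qed

lemma card_le_twice_if_subset_Un_image:
  assumes "finite B" and "A \<subseteq> B \<union> f ` B"
  shows "card A \<le> 2 * card B"
proof -
  have "card A \<le> card B + card (f ` B)"
    using assms by (meson card_Un_le card_mono finite_UnI finite_imageI le_trans)
  also have "\<dots> \<le> 2 * card B" using card_image_le[OF \<open>finite B\<close>, of f] by simp
  finally show ?thesis .
qed

text \<open>Levy's reflection principle: flipping the signs below the highest large level sum
  leaves that level sum unchanged, and it is the mean of the two full sums.\<close>
lemma card_large_level_sum_le:
  fixes \<theta> x :: "'a \<Rightarrow> real"
  assumes fin: "finite I" and "finite T"
  shows "card {e \<in> sign_vectors I. \<exists>t\<in>T. u < \<bar>\<Sum>i | i \<in> I \<and> t \<le> \<theta> i. e i * x i\<bar>}
           \<le> 2 * sign_tail_count I u x"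
proof -
  define level where "level t e = (\<Sum>i | i \<in> I \<and> t \<le> \<theta> i. e i * x i)" for t e
  define bad where "bad e = {t \<in> T. u < \<bar>level t e\<bar>}" for e
  define \<Omega> where "\<Omega> = {e \<in> sign_vectors I. bad e \<noteq> {}}"
  define t_max where "t_max e = Max (bad e)" for e
  define r where "r e = (\<lambda>i\<in>I. if t_max e \<le> \<theta> i then e i else - e i)" for e
  define B where "B = {e \<in> sign_vectors I. u < \<bar>\<Sum>i\<in>I. e i * x i\<bar>}"
  have fin_bad: "finite (bad e)" for e
    using \<open>finite T\<close> by (simp add: bad_def)
  have t_max_bad: "t_max e \<in> bad e" "\<And>t. t \<in> bad e \<Longrightarrow> t \<le> t_max e" if "e \<in> \<Omega>" for e
    using that fin_bad by (auto simp: t_max_def \<Omega>_def)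
  have level_r: "level t (r e) = level t e" if "t_max e \<le> t" for e t
    unfolding level_def r_def using that by (intro sum.cong refl) auto
  have t_max_bad_r: "t_max e \<in> bad (r e)" "\<And>t. t \<in> bad (r e) \<Longrightarrow> t \<le> t_max e" if "e \<in> \<Omega>" for e
    using t_max_bad[OF that] level_r by (force simp: bad_def)+
  have r_\<Omega>: "r e \<in> \<Omega>" if "e \<in> \<Omega>" for e
    using that t_max_bad_r[OF that] by (auto simp: \<Omega>_def sign_vectors_def r_def PiE_iff)
  have t_max_r: "t_max (r e) = t_max e" if "e \<in> \<Omega>" for e
    using t_max_bad_r[OF that] fin_bad unfolding t_max_def by (intro Max_eqI) auto
  have r_r: "r (r e) = e" if "e \<in> \<Omega>" for e
    using that t_max_r[OF that]
    by (auto simp: r_def \<Omega>_def sign_vectors_def PiE_iff extensional_def fun_eq_iff)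
  have full_sums_mean: "(\<Sum>i\<in>I. e i * x i) + (\<Sum>i\<in>I. r e i * x i) = 2 * level (t_max e) e" for e
  proof -
    have "(\<Sum>i\<in>I. e i * x i) + (\<Sum>i\<in>I. r e i * x i)
        = (\<Sum>i\<in>I. 2 * (if t_max e \<le> \<theta> i then e i * x i else 0))"
      unfolding sum.distrib[symmetric] by (intro sum.cong) (auto simp: r_def)
    also have "\<dots> = 2 * level (t_max e) e"
      unfolding level_def using fin by (simp add: sum.inter_filter sum_distrib_left)
    finally show ?thesis .
  qed
  have B_or_r_B: "e \<in> B \<or> r e \<in> B" if "e \<in> \<Omega>" for e
  proof (rule ccontr)
    assume "\<not> (e \<in> B \<or> r e \<in> B)"
    then have "\<bar>\<Sum>i\<in>I. e i * x i\<bar> \<le> u" "\<bar>\<Sum>i\<in>I. r e i * x i\<bar> \<le> u"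
      using that r_\<Omega>[OF that] by (auto simp: B_def \<Omega>_def)
    then have "\<bar>level (t_max e) e\<bar> \<le> u"
      unfolding abs_le_iff using full_sums_mean[of e] by linarith
    then show False
      using t_max_bad(1)[OF that] by (simp add: bad_def)
  qed
  have "\<Omega> \<subseteq> B \<union> r ` B"
    using B_or_r_B r_r by (metis UnCI image_eqI subsetI)
  then have "card \<Omega> \<le> 2 * card B"
    using finite_sign_vectors[OF fin]
    by (intro card_le_twice_if_subset_Un_image) (simp_all add: B_def)
  then show ?thesis
    by (simp add: \<Omega>_def bad_def level_def B_def sign_tail_count_def Bex_def)
qed

lemma sign_tail_count_scale_le:
  fixes \<theta> x :: "'a \<Rightarrow> real"
  assumes fin: "finite I" and \<theta>: "\<And>i. i \<in> I \<Longrightarrow> 0 \<le> \<theta> i \<and> \<theta> i \<le> 1" and "0 \<le> u"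
  shows "sign_tail_count I u (\<lambda>i. \<theta> i * x i) \<le> 2 * sign_tail_count I u x"
proof -
  have "{e \<in> sign_vectors I. u < \<bar>\<Sum>i\<in>I. e i * (\<theta> i * x i)\<bar>}
      \<subseteq> {e \<in> sign_vectors I. \<exists>t\<in>\<theta> ` I. u < \<bar>\<Sum>i | i \<in> I \<and> t \<le> \<theta> i. e i * x i\<bar>}"
  proof safe
    fix e assume e: "e \<in> sign_vectors I" "u < \<bar>\<Sum>i\<in>I. e i * (\<theta> i * x i)\<bar>"
    show "\<exists>t\<in>\<theta> ` I. u < \<bar>\<Sum>i | i \<in> I \<and> t \<le> \<theta> i. e i * x i\<bar>"
    proof (rule ccontr)
      assume "\<not> ?thesis"
      then have "\<bar>\<Sum>i\<in>I. \<theta> i * (e i * x i)\<bar> \<le> u"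
        by (intro abs_sum_mult_le_level_sums[OF fin \<theta> \<open>0 \<le> u\<close>]) auto
      then show False using e(2) by (simp add: mult.left_commute)
    qed
  qed
  then have "sign_tail_count I u (\<lambda>i. \<theta> i * x i)
      \<le> card {e \<in> sign_vectors I. \<exists>t\<in>\<theta> ` I. u < \<bar>\<Sum>i | i \<in> I \<and> t \<le> \<theta> i. e i * x i\<bar>}"
    unfolding sign_tail_count_def by (intro card_mono) (auto simp: finite_sign_vectors fin)
  also have "\<dots> \<le> 2 * sign_tail_count I u x"
    using fin by (intro card_large_level_sum_le) auto
  finally show ?thesis .
qed

lemma sign_tail_count_contraction:
  fixes a c :: "'a \<Rightarrow> real"
  assumes fin: "finite I" and ca: "\<And>i. i \<in> I \<Longrightarrow> \<bar>c i\<bar> \<le> \<bar>a i\<bar>" and "0 \<le> u"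
  shows "sign_tail_count I u c \<le> 2 * sign_tail_count I u a"
proof -
  define \<theta> where "\<theta> i = (if a i = 0 then 0 else \<bar>c i\<bar> / \<bar>a i\<bar>)" for i
  have \<theta>: "0 \<le> \<theta> i \<and> \<theta> i \<le> 1" if "i \<in> I" for i
    using ca[OF that] by (auto simp: \<theta>_def divide_le_eq_1)
  have "sign_tail_count I u c = sign_tail_count I u (\<lambda>i. \<theta> i * \<bar>a i\<bar>)"
    using ca
    by (subst sign_tail_count_abs[symmetric], intro sign_tail_count_cong) (force simp: \<theta>_def)
  also have "\<dots> \<le> 2 * sign_tail_count I u (\<lambda>i. \<bar>a i\<bar>)"
    by (rule sign_tail_count_scale_le[OF fin \<theta> \<open>0 \<le> u\<close>])
  finally show ?thesis by (simp add: sign_tail_count_abs)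
qed

section \<open>Symmetrization of i.i.d. products\<close>

abbreviation weighted_sum_tail :: "real measure \<Rightarrow> 'a set \<Rightarrow> ('a \<Rightarrow> real) \<Rightarrow> real \<Rightarrow> real" where
  "weighted_sum_tail M I w u \<equiv>
     measure (PiM I (\<lambda>_. M)) {b \<in> space (PiM I (\<lambda>_. M)). u < \<bar>\<Sum>i\<in>I. b i * w i\<bar>}"

lemma measurable_PiM_componentwise:
  assumes "\<And>i. i \<in> I \<Longrightarrow> f i \<in> measurable (M i) (N i)"
  shows "(\<lambda>x. \<lambda>i\<in>I. f i (x i)) \<in> measurable (PiM I M) (PiM I N)"
  using assms
  by (intro measurable_restrict) (auto intro: measurable_compose[OF measurable_component_singleton])

lemma distr_PiM_componentwise:
  assumes fin: "finite I" and "prob_space M" and "prob_space N"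
    and f: "\<And>i. i \<in> I \<Longrightarrow> f i \<in> measurable M N"
  shows "distr (PiM I (\<lambda>_. M)) (PiM I (\<lambda>_. N)) (\<lambda>x. \<lambda>i\<in>I. f i (x i))
    = PiM I (\<lambda>i. distr M N (f i))"
proof -
  interpret M: product_prob_space "\<lambda>_. M" by (intro product_prob_spaceI) fact
  define N' where "N' i = (if i \<in> I then distr M N (f i) else N)" for i
  interpret N': product_prob_space N'
    using f \<open>prob_space N\<close> prob_space.prob_space_distr[OF \<open>prob_space M\<close>]
    by (intro product_prob_spaceI) (auto simp: N'_def)
  have sets_N': "sets (PiM I N') = sets (PiM I (\<lambda>_. N))"
    unfolding N'_def by (intro sets_PiM_cong) auto
  have meas: "(\<lambda>x. \<lambda>i\<in>I. f i (x i)) \<in> measurable (PiM I (\<lambda>_. M)) (PiM I (\<lambda>_. N))"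
    using f by (rule measurable_PiM_componentwise)
  have "distr (PiM I (\<lambda>_. M)) (PiM I (\<lambda>_. N)) (\<lambda>x. \<lambda>i\<in>I. f i (x i)) = PiM I N'"
  proof (rule N'.PiM_eqI[OF fin])
    fix A assume A: "\<And>i. i \<in> I \<Longrightarrow> A i \<in> sets (N' i)"
    then have "Pi\<^sub>E I A \<in> sets (PiM I (\<lambda>_. N))"
      unfolding sets_N'[symmetric] by (intro sets_PiM_I_finite fin)
    then have "emeasure (distr (PiM I (\<lambda>_. M)) (PiM I (\<lambda>_. N)) (\<lambda>x. \<lambda>i\<in>I. f i (x i))) (Pi\<^sub>E I A)
        = emeasure (PiM I (\<lambda>_. M)) (Pi\<^sub>E I (\<lambda>i. f i -` A i \<inter> space M))"
      using A by (subst emeasure_distr[OF meas])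
        (auto intro!: arg_cong[where f = "emeasure _"]
          simp: space_PiM PiE_def Pi_def extensional_def N'_def)
    also have "\<dots> = (\<Prod>i\<in>I. emeasure M (f i -` A i \<inter> space M))"
      using A f by (intro M.emeasure_PiM fin) (auto simp: N'_def)
    also have "\<dots> = (\<Prod>i\<in>I. emeasure (N' i) (A i))"
      using A f by (intro prod.cong refl) (auto simp: N'_def emeasure_distr)
    finally show "emeasure (distr (PiM I (\<lambda>_. M)) (PiM I (\<lambda>_. N)) (\<lambda>x. \<lambda>i\<in>I. f i (x i))) (Pi\<^sub>E I A)
        = (\<Prod>i\<in>I. emeasure (N' i) (A i))" .
  qed (use sets_N' in simp)
  also have "PiM I N' = PiM I (\<lambda>i. distr M N (f i))"
    by (intro PiM_cong) (auto simp: N'_def)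
  finally show ?thesis .
qed

lemma borel_measurable_sign_tail_count:
  assumes "finite I" and X: "\<And>i. i \<in> I \<Longrightarrow> X i \<in> borel_measurable N"
  shows "(\<lambda>b. real (sign_tail_count I u (\<lambda>i. X i b))) \<in> borel_measurable N"
proof -
  have [measurable]: "(\<lambda>b. \<Sum>i\<in>I. e i * X i b) \<in> borel_measurable N" for e
    using X by (intro borel_measurable_sum borel_measurable_times) auto
  show ?thesis unfolding sign_tail_count_eq_sum[OF assms(1)] by measurable
qed

lemma sign_tail_count_le_card: "finite I \<Longrightarrow> sign_tail_count I u x \<le> card (sign_vectors I)"
  unfolding sign_tail_count_def by (intro card_mono finite_sign_vectors) auto

context real_distribution
begin

lemma borel_measurable_PiM_component:
  "i \<in> I \<Longrightarrow> (\<lambda>b. b i) \<in> borel_measurable (PiM I (\<lambda>_. M))"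
  using measurable_component_singleton[of i I "\<lambda>_. M"]
  by (simp add: measurable_cong_sets[OF refl events_eq_borel])

lemma distr_PiM_sign_flip:
  assumes "finite I" and "symmetric_law M" and e: "e \<in> sign_vectors I"
  shows "distr (PiM I (\<lambda>_. M)) (PiM I (\<lambda>_. M)) (\<lambda>b. \<lambda>i\<in>I. e i * b i) = PiM I (\<lambda>_. M)"
proof -
  have "distr M M (\<lambda>x. e i * x) = M" if i: "i \<in> I" for i
  proof -
    consider "e i = 1" | "e i = -1" using e i by (auto simp: sign_vectors_def)
    then show ?thesis
    proof cases
      case 2
      then have "distr M M (\<lambda>x. e i * x) = distr M borel uminus"
        by (intro distr_cong) (auto simp: events_eq_borel)
      then show ?thesis using \<open>symmetric_law M\<close> by (simp add: symmetric_law_def)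
    qed (simp add: distr_id)
  qed
  moreover have "(\<lambda>x. e i * x) \<in> measurable M M" for i
    by (simp add: measurable_cong_sets[OF events_eq_borel events_eq_borel])
  ultimately show ?thesis
    using distr_PiM_componentwise[OF \<open>finite I\<close> prob_space_axioms prob_space_axioms,
        of "\<lambda>i x. e i * x"]
    by (simp cong: PiM_cong)
qed

text \<open>Symmetrization: the law of an i.i.d. symmetric vector is invariant under every sign flip,
  so its tail probability is the average over all flips.\<close>
lemma measure_tail_symmetrization:
  assumes fin: "finite I" and "symmetric_law M"
  shows "real (card (sign_vectors I)) * weighted_sum_tail M I w u
    = (\<integral>b. real (sign_tail_count I u (\<lambda>i. w i * b i)) \<partial>PiM I (\<lambda>_. M))"
proof -
  define P where "P = PiM I (\<lambda>_. M)"
  interpret P: prob_space P unfolding P_def by (intro prob_space_PiM prob_space_axioms)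
  define E where "E = {b \<in> space P. u < \<bar>\<Sum>i\<in>I. b i * w i\<bar>}"
  define flip where "flip e b = (\<lambda>i\<in>I. e i * b i)" for e b :: "'a \<Rightarrow> real"
  have E: "E \<in> sets P"
    unfolding E_def P_def using borel_measurable_PiM_component[of _ I] by measurable
  have flip: "flip e \<in> measurable P P" for e
    unfolding P_def flip_def
    by (intro measurable_PiM_componentwise)
      (simp add: measurable_cong_sets[OF events_eq_borel events_eq_borel])
  have indicator_flip: "indicator E (flip e b) = of_bool (u < \<bar>\<Sum>i\<in>I. e i * (w i * b i)\<bar>)"
    if "b \<in> space P" for e b
  proof -
    have "(\<Sum>i\<in>I. flip e b i * w i) = (\<Sum>i\<in>I. e i * (w i * b i))"
      by (auto simp: flip_def mult_ac intro!: sum.cong)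
    then show ?thesis
      using measurable_space[OF flip that] by (simp add: E_def indicator_def)
  qed
  have "measure P E = (\<integral>b. of_bool (u < \<bar>\<Sum>i\<in>I. e i * (w i * b i)\<bar>) \<partial>P)"
    if "e \<in> sign_vectors I" for e
  proof -
    have "measure P E = (\<integral>b. indicator E b \<partial>distr P P (flip e))"
      using distr_PiM_sign_flip[OF fin \<open>symmetric_law M\<close> that] E
      by (simp add: P_def flip_def[abs_def])
    also have "\<dots> = (\<integral>b. indicator E (flip e b) \<partial>P)"
      using E by (intro integral_distr flip) simp
    finally show ?thesis by (simp add: indicator_flip cong: Bochner_Integration.integral_cong)
  qed
  then have "real (card (sign_vectors I)) * measure P E
      = (\<Sum>e\<in>sign_vectors I. \<integral>b. of_bool (u < \<bar>\<Sum>i\<in>I. e i * (w i * b i)\<bar>) \<partial>P)"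
    by (metis (no_types, lifting) sum.cong sum_constant)
  also have "\<dots> = (\<integral>b. real (sign_tail_count I u (\<lambda>i. w i * b i)) \<partial>P)"
    unfolding sign_tail_count_eq_sum[OF fin]
    by (intro Bochner_Integration.integral_sum[symmetric] P.integrable_const_bound[where B = 1])
      (use borel_measurable_PiM_component[of _ I] in \<open>auto simp: P_def\<close>)
  finally show ?thesis unfolding E_def P_def .
qed

end

section \<open>Quantile coupling\<close>

text \<open>Only meaningful for 0 < \<omega> < 1: otherwise the set is empty or unbounded below.\<close>
definition quantile :: "real measure \<Rightarrow> real \<Rightarrow> real" where
  "quantile M \<omega> = Inf {x. \<omega> \<le> cdf M x}"

definition uniform_01 :: "real measure" where
  "uniform_01 = restrict_space lborel {0<..<1}"

lemma prob_space_uniform_01: "prob_space uniform_01"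
  unfolding uniform_01_def
  by (auto simp: emeasure_restrict_space space_restrict_space intro!: prob_spaceI)

context real_distribution
begin

lemma symmetric_law_measure_greater:
  assumes "symmetric_law M"
  shows "measure M {x. t < x} = measure M {x. x < -t}"
proof -
  have "measure M {x. x < -t} = measure (distr M borel uminus) {x. x < -t}"
    using assms by (simp add: symmetric_law_def)
  also have "\<dots> = measure M {x. t < x}"
    by (subst measure_distr) (auto intro!: arg_cong[where f = "measure M"])
  finally show ?thesis ..
qed

lemma symmetric_law_measure_abs_greater:
  assumes "symmetric_law M" and "0 \<le> t"
  shows "measure M {x. t < \<bar>x\<bar>} = 2 * measure M {x. t < x}"
proof -
  have "measure M {x. t < \<bar>x\<bar>} = measure M ({x. t < x} \<union> {x. x < -t})"
    by (intro arg_cong[where f = "measure M"]) auto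
  also have "\<dots> = measure M {x. t < x} + measure M {x. x < -t}"
    using \<open>0 \<le> t\<close> by (intro finite_measure_Union) auto
  finally show ?thesis using symmetric_law_measure_greater[OF assms(1)] by simp
qed

lemma symmetric_law_measure_pos_le_half:
  assumes "symmetric_law M"
  shows "measure M {x. 0 < x} \<le> 1 / 2"
  using symmetric_law_measure_abs_greater[OF assms, of 0] prob_le_1[of "{x. 0 < \<bar>x\<bar>}"] by simp

lemma cdf_eq_one_minus_measure_greater: "cdf M x = 1 - measure M {y. x < y}"
proof -
  have "cdf M x = measure M (space M - {y. x < y})"
    unfolding cdf_def2 by (intro arg_cong[where f = "measure M"]) auto
  also have "\<dots> = 1 - measure M {y. x < y}" by (intro prob_compl) auto
  finally show ?thesis .
qed

lemma quantile_le_iff: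
  assumes "0 < \<omega>" "\<omega> < 1"
  shows "quantile M \<omega> \<le> x \<longleftrightarrow> \<omega> \<le> cdf M x"
proof -
  interpret cdf_distribution M unfolding cdf_distribution_def by (rule real_distribution_axioms)
  show ?thesis unfolding quantile_def by (rule pseudoinverse[OF assms, symmetric])
qed

lemma measurable_quantile: "quantile M \<in> measurable uniform_01 M"
proof -
  interpret cdf_distribution M unfolding cdf_distribution_def by (rule real_distribution_axioms)
  have "sets uniform_01 = sets (restrict_space borel {0<..<1::real})"
    unfolding uniform_01_def by (rule sets_restrict_space_cong) simp
  then show ?thesis
    using measurable_CI unfolding quantile_def[abs_def]
    by (subst measurable_cong_sets[OF _ events_eq_borel]) auto
qed

lemma distr_quantile: "distr uniform_01 M (quantile M) = M"
proof -
  interpret cdf_distribution M unfolding cdf_distribution_def by (rule real_distribution_axioms)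
  have "distr uniform_01 M (quantile M) = distr (restrict_space lborel {0<..<1::real}) borel I"
    unfolding uniform_01_def quantile_def[abs_def] by (intro distr_cong) auto
  then show ?thesis by (simp add: distr_I_eq_M)
qed

lemma distr_PiM_quantile:
  "finite I \<Longrightarrow>
    distr (PiM I (\<lambda>_. uniform_01)) (PiM I (\<lambda>_. M)) (\<lambda>U. \<lambda>i\<in>I. quantile M (U i)) = PiM I (\<lambda>_. M)"
  using distr_PiM_componentwise[OF _ prob_space_uniform_01 prob_space_axioms measurable_quantile]
  by (simp add: distr_quantile)

lemma quantile_nonneg:
  assumes "symmetric_law M" and "1 / 2 < \<omega>" "\<omega> < 1"
  shows "0 \<le> quantile M \<omega>"
proof (rule ccontr)
  assume neg: "\<not> 0 \<le> quantile M \<omega>"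
  have "\<omega> \<le> cdf M (quantile M \<omega>)"
    using quantile_le_iff[of \<omega> "quantile M \<omega>"] assms(2,3) by simp
  also have "\<dots> \<le> measure M {x. x < 0}"
    unfolding cdf_def2 using neg by (intro finite_measure_mono) auto
  also have "\<dots> \<le> 1 / 2"
    using symmetric_law_measure_greater[OF assms(1), of 0]
      symmetric_law_measure_pos_le_half[OF assms(1)]
    by simp
  finally show False using assms(2) by simp
qed

lemma quantile_nonpos:
  assumes "symmetric_law M" and "0 < \<omega>" "\<omega> \<le> 1 / 2"
  shows "quantile M \<omega> \<le> 0"
proof -
  have "\<omega> \<le> cdf M 0"
    using cdf_eq_one_minus_measure_greater[of 0] symmetric_law_measure_pos_le_half[OF assms(1)]
      assms(3)
    by linarith
  then show ?thesis using quantile_le_iff[of \<omega> 0] assms(2,3) by linarith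
qed

lemma borel_measurable_quantile: "quantile M \<in> borel_measurable uniform_01"
  using measurable_quantile by (simp add: measurable_cong_sets[OF refl events_eq_borel])

lemma measure_tail_quantile_coupling:
  assumes fin: "finite I" and "symmetric_law M"
  shows "real (card (sign_vectors I)) * weighted_sum_tail M I w u
    = (\<integral>U. real (sign_tail_count I u (\<lambda>i. w i * quantile M (U i))) \<partial>PiM I (\<lambda>_. uniform_01))"
proof -
  define Q where "Q U = (\<lambda>i\<in>I. quantile M (U i))" for U :: "'a \<Rightarrow> real"
  have Q: "Q \<in> measurable (PiM I (\<lambda>_. uniform_01)) (PiM I (\<lambda>_. M))"
    unfolding Q_def by (intro measurable_PiM_componentwise measurable_quantile)
  have "real (card (sign_vectors I)) * weighted_sum_tail M I w u
      = (\<integral>b. real (sign_tail_count I u (\<lambda>i. w i * b i)) \<partial>PiM I (\<lambda>_. M))"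
    by (rule measure_tail_symmetrization[OF assms])
  also have "\<dots> = (\<integral>b. real (sign_tail_count I u (\<lambda>i. w i * b i))
      \<partial>distr (PiM I (\<lambda>_. uniform_01)) (PiM I (\<lambda>_. M)) Q)"
    by (simp add: Q_def[abs_def] distr_PiM_quantile[OF fin])
  also have "\<dots> = (\<integral>U. real (sign_tail_count I u (\<lambda>i. w i * Q U i)) \<partial>PiM I (\<lambda>_. uniform_01))"
    by (intro integral_distr Q borel_measurable_sign_tail_count fin borel_measurable_times
        borel_measurable_const borel_measurable_PiM_component)
  also have "\<dots>
      = (\<integral>U. real (sign_tail_count I u (\<lambda>i. w i * quantile M (U i))) \<partial>PiM I (\<lambda>_. uniform_01))"
    by (intro Bochner_Integration.integral_cong refl arg_cong[where f = real] sign_tail_count_cong)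
      (simp add: Q_def)
  finally show ?thesis .
qed

end

locale symmetric_tail_domination =
  heavy: real_distribution \<mu> + light: real_distribution \<nu> for \<mu> \<nu> +
  assumes symmetric_heavy: "symmetric_law \<mu>" and symmetric_light: "symmetric_law \<nu>"
    and tail_le: "\<And>t. 0 < t \<Longrightarrow> measure \<nu> {x. t < \<bar>x\<bar>} \<le> measure \<mu> {x. t < \<bar>x\<bar>}"
begin

lemma cdf_heavy_le_light: "0 < x \<Longrightarrow> cdf \<mu> x \<le> cdf \<nu> x"
  using heavy.cdf_eq_one_minus_measure_greater[of x] light.cdf_eq_one_minus_measure_greater[of x]
    heavy.symmetric_law_measure_abs_greater[OF symmetric_heavy, of x]
    light.symmetric_law_measure_abs_greater[OF symmetric_light, of x] tail_le[of x]
  by simp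

lemma cdf_light_le_heavy:
  assumes "y < y'" "y' < 0"
  shows "cdf \<nu> y \<le> cdf \<mu> y'"
proof -
  have "cdf \<nu> y \<le> measure \<nu> {z. z < y'}"
    unfolding cdf_def2 using assms(1) by (intro light.finite_measure_mono) auto
  also have "\<dots> = measure \<nu> {z. -y' < \<bar>z\<bar>} / 2"
    using light.symmetric_law_measure_greater[OF symmetric_light, of "-y'"]
      light.symmetric_law_measure_abs_greater[OF symmetric_light, of "-y'"] assms(2)
    by simp
  also have "\<dots> \<le> measure \<mu> {z. -y' < \<bar>z\<bar>} / 2"
    using tail_le[of "-y'"] assms(2) by simp
  also have "\<dots> = measure \<mu> {z. z < y'}"
    using heavy.symmetric_law_measure_greater[OF symmetric_heavy, of "-y'"]
      heavy.symmetric_law_measure_abs_greater[OF symmetric_heavy, of "-y'"] assms(2)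
    by simp
  also have "\<dots> \<le> cdf \<mu> y'"
    unfolding cdf_def2 by (intro heavy.finite_measure_mono) auto
  finally show ?thesis .
qed

lemma abs_quantile_light_le_heavy:
  assumes \<omega>: "0 < \<omega>" "\<omega> < 1"
  shows "\<bar>quantile \<nu> \<omega>\<bar> \<le> \<bar>quantile \<mu> \<omega>\<bar>"
proof (cases "1 / 2 < \<omega>")
  case True
  have nonneg: "0 \<le> quantile \<mu> \<omega>" "0 \<le> quantile \<nu> \<omega>"
    using heavy.quantile_nonneg[OF symmetric_heavy True \<omega>(2)]
      light.quantile_nonneg[OF symmetric_light True \<omega>(2)] by auto
  have "quantile \<nu> \<omega> \<le> quantile \<mu> \<omega>"
  proof (rule dense_ge)
    fix x assume "quantile \<mu> \<omega> < x"
    then have "\<omega> \<le> cdf \<nu> x"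
      using heavy.quantile_le_iff[OF \<omega>, of x] cdf_heavy_le_light[of x] nonneg by auto
    then show "quantile \<nu> \<omega> \<le> x" using light.quantile_le_iff[OF \<omega>] by simp
  qed
  then show ?thesis using nonneg by simp
next
  case False
  then have nonpos: "quantile \<mu> \<omega> \<le> 0" "quantile \<nu> \<omega> \<le> 0"
    using heavy.quantile_nonpos[OF symmetric_heavy \<omega>(1)]
      light.quantile_nonpos[OF symmetric_light \<omega>(1)] by auto
  have "quantile \<mu> \<omega> \<le> quantile \<nu> \<omega>"
  proof (cases "quantile \<nu> \<omega> < 0")
    case True
    then show ?thesis
    proof (rule dense_ge_bounded)
      fix y assume "quantile \<nu> \<omega> < y" "y < 0"
      then have "\<omega> \<le> cdf \<mu> y"
        using light.quantile_le_iff[OF \<omega>, of "quantile \<nu> \<omega>"] cdf_light_le_heavy[of "quantile \<nu> \<omega>" y]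
        by auto
      then show "quantile \<mu> \<omega> \<le> y" using heavy.quantile_le_iff[OF \<omega>] by simp
    qed
  qed (use nonpos in simp)
  then show ?thesis using nonpos by simp
qed

text \<open>Under the quantile coupling the light vector is coordinatewise dominated in absolute value
  by the heavy one, and the contraction principle costs a factor 2.\<close>
lemma prob_weighted_sum_tail_le:
  fixes w :: "'a \<Rightarrow> real"
  assumes fin: "finite I" and "0 \<le> u"
  shows "weighted_sum_tail \<nu> I w u \<le> 2 * weighted_sum_tail \<mu> I w u"
proof -
  define U where "U = PiM I (\<lambda>_. uniform_01)"
  interpret U: prob_space U unfolding U_def by (intro prob_space_PiM prob_space_uniform_01)
  define coupled_count where
    "coupled_count M V = real (sign_tail_count I u (\<lambda>i. w i * quantile M (V i)))" for M V
  have integrable: "integrable U (coupled_count M)" if "real_distribution M" for M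
  proof (rule U.integrable_const_bound[where B = "card (sign_vectors I)"])
    show "AE V in U. norm (coupled_count M V) \<le> real (card (sign_vectors I))"
      using sign_tail_count_le_card[OF fin] by (simp add: coupled_count_def)
    show "coupled_count M \<in> borel_measurable U"
      unfolding coupled_count_def[abs_def] U_def
      by (intro borel_measurable_sign_tail_count fin borel_measurable_times borel_measurable_const
          measurable_compose[OF _ real_distribution.borel_measurable_quantile[OF that]]
          measurable_component_singleton)
  qed
  have "coupled_count \<nu> V \<le> 2 * coupled_count \<mu> V" if "V \<in> space U" for V
  proof -
    have "0 < V i \<and> V i < 1" if "i \<in> I" for i
      using \<open>V \<in> space U\<close> that
      by (auto simp: U_def uniform_01_def space_PiM PiE_iff space_restrict_space)
    then have "sign_tail_count I u (\<lambda>i. w i * quantile \<nu> (V i))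
        \<le> 2 * sign_tail_count I u (\<lambda>i. w i * quantile \<mu> (V i))"
      by (intro sign_tail_count_contraction fin \<open>0 \<le> u\<close>)
        (auto simp: abs_mult intro!: mult_left_mono abs_quantile_light_le_heavy)
    then show ?thesis by (simp add: coupled_count_def)
  qed
  then have "integral\<^sup>L U (coupled_count \<nu>) \<le> integral\<^sup>L U (\<lambda>V. 2 * coupled_count \<mu> V)"
    using integrable heavy.real_distribution_axioms light.real_distribution_axioms
    by (intro integral_mono) auto
  then have "real (card (sign_vectors I)) * weighted_sum_tail \<nu> I w u
      \<le> real (card (sign_vectors I)) * (2 * weighted_sum_tail \<mu> I w u)"
    using light.measure_tail_quantile_coupling[OF fin symmetric_light, of u w]
      heavy.measure_tail_quantile_coupling[OF fin symmetric_heavy, of u w]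
    by (simp add: U_def coupled_count_def[abs_def])
  moreover have "0 < card (sign_vectors I)"
    using fin by (simp add: card_gt_0_iff finite_sign_vectors sign_vectors_nonempty)
  ultimately show ?thesis by simp
qed

end

section \<open>Weighted sums of centered normals\<close>

lemma indep_vars_PiM_coordinates:
  assumes "I \<noteq> {}" and M: "\<And>i. i \<in> I \<Longrightarrow> prob_space (M i)"
  shows "prob_space.indep_vars (PiM I M) M (\<lambda>i x. x i) I"
proof -
  interpret P: prob_space "PiM I M" by (intro prob_space_PiM M)
  have "distr (PiM I M) (PiM I M) (\<lambda>x. restrict x I) = distr (PiM I M) (PiM I M) (\<lambda>x. x)"
    by (intro distr_cong) (auto simp: space_PiM)
  also have "\<dots> = PiM I (\<lambda>i. distr (PiM I M) (M i) (\<lambda>x. x i))"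
    using M by (auto simp: distr_PiM_component intro!: PiM_cong)
  finally show ?thesis
    by (subst P.indep_vars_iff_distr_eq_PiM'[OF \<open>I \<noteq> {}\<close>]) auto
qed

definition centered_normal :: "real \<Rightarrow> real measure" where
  "centered_normal \<sigma> = density lborel (normal_density 0 \<sigma>)"

lemma real_distribution_centered_normal: "0 < \<sigma> \<Longrightarrow> real_distribution (centered_normal \<sigma>)"
  unfolding real_distribution_def real_distribution_axioms_def centered_normal_def
  using prob_space_normal_density by auto

lemma distributed_centered_normal:
  "distributed (centered_normal \<sigma>) lborel (\<lambda>x. x) (normal_density 0 \<sigma>)"
  unfolding distributed_def centered_normal_def by (auto simp: distr_id2)

lemma distr_centered_normal_scale:
  assumes "0 < \<sigma>" and "a \<noteq> 0"
  shows "distr (centered_normal \<sigma>) lborel (\<lambda>x. a * x) = centered_normal (\<bar>a\<bar> * \<sigma>)"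
proof -
  interpret real_distribution "centered_normal \<sigma>"
    by (rule real_distribution_centered_normal[OF \<open>0 < \<sigma>\<close>])
  show ?thesis
    using normal_density_affine[OF distributed_centered_normal assms, of 0]
    by (simp add: distributed_def centered_normal_def)
qed

lemma symmetric_law_centered_normal:
  assumes "0 < \<sigma>"
  shows "symmetric_law (centered_normal \<sigma>)"
proof -
  have "distr (centered_normal \<sigma>) borel uminus = distr (centered_normal \<sigma>) lborel (\<lambda>x. -1 * x)"
    by (intro distr_cong) auto
  then show ?thesis
    using distr_centered_normal_scale[OF assms, of "-1"] by (simp add: symmetric_law_def)
qed

lemma measure_centered_normal_abs_greater:
  assumes "0 < \<sigma>"
  shows "measure (centered_normal \<sigma>) {x. t < \<bar>x\<bar>}
    = measure (density lborel std_normal_density) {g. t < \<bar>\<sigma> * g\<bar>}"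
proof -
  have "measure (centered_normal \<sigma>) {x. t < \<bar>x\<bar>}
      = measure (distr (centered_normal 1) lborel (\<lambda>g. \<sigma> * g)) {x. t < \<bar>x\<bar>}"
    using distr_centered_normal_scale[of 1 \<sigma>] assms by simp
  also have "\<dots> = measure (density lborel std_normal_density) {g. t < \<bar>\<sigma> * g\<bar>}"
    by (subst measure_distr) (auto simp: centered_normal_def)
  finally show ?thesis .
qed

lemma distributed_weighted_sum_centered_normal:
  fixes w :: "'a \<Rightarrow> real"
  assumes fin: "finite I" and "0 < \<sigma>" and w: "(\<Sum>i\<in>I. (w i)\<^sup>2) = 1"
  defines "P \<equiv> PiM I (\<lambda>_. centered_normal \<sigma>)"
  shows "distributed P lborel (\<lambda>b. \<Sum>i\<in>I. w i * b i) (normal_density 0 \<sigma>)"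
proof -
  interpret normal: real_distribution "centered_normal \<sigma>"
    by (rule real_distribution_centered_normal[OF \<open>0 < \<sigma>\<close>])
  interpret P: prob_space P unfolding P_def by (intro prob_space_PiM normal.prob_space_axioms)
  define J where "J = {i \<in> I. w i \<noteq> 0}"
  have "finite J" using fin by (simp add: J_def)
  have sum_J: "(\<Sum>i\<in>J. f i) = (\<Sum>i\<in>I. f i)" if "\<And>i. w i = 0 \<Longrightarrow> f i = 0" for f :: "'a \<Rightarrow> real"
    using fin that by (intro sum.mono_neutral_left) (auto simp: J_def)
  have "J \<noteq> {}" using w sum_J[of "\<lambda>i. (w i)\<^sup>2"] by force
  then have "I \<noteq> {}" by (auto simp: J_def)
  then have "P.indep_vars (\<lambda>_. centered_normal \<sigma>) (\<lambda>i b. b i) I"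
    unfolding P_def by (intro indep_vars_PiM_coordinates normal.prob_space_axioms)
  then have "P.indep_vars (\<lambda>_. borel) (\<lambda>i b. w i * b i) I"
    using P.indep_vars_compose2[of "\<lambda>_. centered_normal \<sigma>" "\<lambda>i b. b i" I
        "\<lambda>i x. w i * x" "\<lambda>_. borel"]
    by (simp add: measurable_cong_sets[OF normal.events_eq_borel refl])
  then have indep: "P.indep_vars (\<lambda>_. borel) (\<lambda>i b. w i * b i) J"
    by (rule P.indep_vars_subset) (auto simp: J_def)
  have "distributed P lborel (\<lambda>b. b i) (normal_density 0 \<sigma>)" if "i \<in> I" for i
    using distr_PiM_component[OF normal.prob_space_axioms that] that
    by (auto simp: P_def distributed_def centered_normal_def cong: distr_cong)
  then have "distributed P lborel (\<lambda>b. w i * b i) (normal_density 0 (\<bar>w i\<bar> * \<sigma>))" if "i \<in> J" for i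
    using P.normal_density_affine[of "\<lambda>b. b i" 0 \<sigma> "w i" 0] \<open>0 < \<sigma>\<close> that by (simp add: J_def)
  then have "distributed P lborel (\<lambda>b. \<Sum>i\<in>J. w i * b i)
      (normal_density (\<Sum>i\<in>J. 0) (sqrt (\<Sum>i\<in>J. (\<bar>w i\<bar> * \<sigma>)\<^sup>2)))"
    using \<open>0 < \<sigma>\<close> by (intro P.sum_indep_normal \<open>finite J\<close> \<open>J \<noteq> {}\<close> indep) (auto simp: J_def)
  moreover have "sqrt (\<Sum>i\<in>J. (\<bar>w i\<bar> * \<sigma>)\<^sup>2) = \<sigma>"
    using \<open>0 < \<sigma>\<close> w sum_J[of "\<lambda>i. (w i)\<^sup>2"]
    by (simp add: power_mult_distrib sum_distrib_right[symmetric])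
  moreover have "(\<Sum>i\<in>J. w i * b i) = (\<Sum>i\<in>I. w i * b i)" for b
    by (rule sum_J) simp
  ultimately show ?thesis by simp
qed

lemma weighted_sum_tail_centered_normal:
  fixes w :: "'a \<Rightarrow> real"
  assumes "finite I" and "0 < \<sigma>" and "(\<Sum>i\<in>I. (w i)\<^sup>2) = 1"
  shows "weighted_sum_tail (centered_normal \<sigma>) I w u = measure (centered_normal \<sigma>) {x. u < \<bar>x\<bar>}"
proof -
  define P where "P = PiM I (\<lambda>_. centered_normal \<sigma>)"
  have S: "distributed P lborel (\<lambda>b. \<Sum>i\<in>I. w i * b i) (normal_density 0 \<sigma>)"
    unfolding P_def using assms(1-3) by (rule distributed_weighted_sum_centered_normal)
  have "measure P {b \<in> space P. u < \<bar>\<Sum>i\<in>I. b i * w i\<bar>}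
      = measure P ((\<lambda>b. \<Sum>i\<in>I. w i * b i) -` {x. u < \<bar>x\<bar>} \<inter> space P)"
    by (intro arg_cong[where f = "measure P"]) (auto simp: mult.commute)
  also have "\<dots> = measure (distr P lborel (\<lambda>b. \<Sum>i\<in>I. w i * b i)) {x. u < \<bar>x\<bar>}"
    using S by (intro measure_distr[symmetric]) (auto simp: distributed_def)
  also have "\<dots> = measure (centered_normal \<sigma>) {x. u < \<bar>x\<bar>}"
    using S by (simp add: distributed_def centered_normal_def)
  finally show ?thesis unfolding P_def .
qed

lemma scaled_normal_density_ge:
  assumes "0 < \<sigma>" and "0 \<le> u"
  shows "exp (- (u / \<sigma>)\<^sup>2) / 9 \<le> \<sigma> * normal_density 0 \<sigma> (u + \<sigma>)"
proof -
  define E where "E = exp (- (u / \<sigma>)\<^sup>2)"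
  have "(u + \<sigma>)\<^sup>2 + (u - \<sigma>)\<^sup>2 = 2 * u\<^sup>2 + 2 * \<sigma>\<^sup>2"
    by (simp add: power2_eq_square algebra_simps)
  then have "(u + \<sigma>)\<^sup>2 \<le> 2 * u\<^sup>2 + 2 * \<sigma>\<^sup>2"
    using zero_le_power2[of "u - \<sigma>"] by linarith
  then have "(u + \<sigma>)\<^sup>2 / (2 * \<sigma>\<^sup>2) \<le> (2 * u\<^sup>2 + 2 * \<sigma>\<^sup>2) / (2 * \<sigma>\<^sup>2)"
    by (simp add: divide_right_mono)
  also have "\<dots> = (u / \<sigma>)\<^sup>2 + 1"
    using \<open>0 < \<sigma>\<close> by (simp add: power_divide add_divide_distrib)
  finally have bound: "E * exp (-1) \<le> exp (- (u + \<sigma>)\<^sup>2 / (2 * \<sigma>\<^sup>2))"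
    by (simp add: E_def mult_exp_exp)
  have "sqrt (2 * pi) \<le> 3"
    using pi_less_4 real_sqrt_le_mono[of "2 * pi" "3\<^sup>2"] by simp
  have "E / 9 \<le> E * exp (-1) / 3"
    using exp_le by (simp add: E_def exp_minus field_simps)
  also have "\<dots> \<le> E * exp (-1) / sqrt (2 * pi)"
    using \<open>sqrt (2 * pi) \<le> 3\<close> by (intro divide_left_mono) (auto simp: E_def)
  also have "\<dots> \<le> exp (- (u + \<sigma>)\<^sup>2 / (2 * \<sigma>\<^sup>2)) / sqrt (2 * pi)"
    using bound by (intro divide_right_mono) auto
  also have "\<dots> = \<sigma> * normal_density 0 \<sigma> (u + \<sigma>)"
    using \<open>0 < \<sigma>\<close> by (simp add: normal_density_def real_sqrt_mult)
  finally show ?thesis by (simp add: E_def)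
qed

lemma centered_normal_tail_ge:
  assumes "0 < \<sigma>" and "0 \<le> u"
  shows "exp (- (u / \<sigma>)\<^sup>2) / 9 \<le> measure (centered_normal \<sigma>) {x. u < \<bar>x\<bar>}"
proof -
  interpret real_distribution "centered_normal \<sigma>"
    by (rule real_distribution_centered_normal[OF \<open>0 < \<sigma>\<close>])
  define c where "c = normal_density 0 \<sigma> (u + \<sigma>)"
  have c_le: "c \<le> normal_density 0 \<sigma> x" if "x \<in> {u<..u + \<sigma>}" for x
  proof -
    have "x\<^sup>2 \<le> (u + \<sigma>)\<^sup>2" using that \<open>0 \<le> u\<close> by (intro power_mono) auto
    then show ?thesis
      using \<open>0 < \<sigma>\<close> by (simp add: c_def normal_density_def divide_right_mono)
  qed
  have "0 \<le> c" by (simp add: c_def)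
  then have "ennreal (c * \<sigma>) = (\<integral>\<^sup>+x. ennreal c * indicator {u<..u + \<sigma>} x \<partial>lborel)"
    using \<open>0 < \<sigma>\<close> by (subst nn_integral_cmult_indicator) (auto simp: ennreal_mult)
  also have "\<dots> \<le> (\<integral>\<^sup>+x. ennreal (normal_density 0 \<sigma> x) * indicator {u<..u + \<sigma>} x \<partial>lborel)"
    using c_le by (intro nn_integral_mono) (auto simp: indicator_def ennreal_leI)
  also have "\<dots> = emeasure (centered_normal \<sigma>) {u<..u + \<sigma>}"
    by (simp add: centered_normal_def emeasure_density)
  finally have "c * \<sigma> \<le> measure (centered_normal \<sigma>) {u<..u + \<sigma>}"
    by (simp add: emeasure_eq_measure)
  also have "\<dots> \<le> measure (centered_normal \<sigma>) {x. u < \<bar>x\<bar>}"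
    using \<open>0 \<le> u\<close> by (intro finite_measure_mono) auto
  finally have "c * \<sigma> \<le> measure (centered_normal \<sigma>) {x. u < \<bar>x\<bar>}" .
  then show ?thesis
    using scaled_normal_density_ge[OF assms] by (simp add: c_def mult.commute)
qed

lemma super_gaussian_weighted_sum_tail_ge:
  fixes w :: "'a \<Rightarrow> real"
  assumes "symmetric_law \<mu>" and "super_gaussian \<mu> \<sigma>"
    and "finite I" and "(\<Sum>i\<in>I. (w i)\<^sup>2) = 1" and "0 \<le> u"
  shows "exp (- (u / \<sigma>)\<^sup>2) / 18 \<le> weighted_sum_tail \<mu> I w u"
proof -
  have "0 < \<sigma>" and "real_distribution \<mu>"
    and tail: "\<And>t. 0 < t \<Longrightarrow>
      measure (density lborel std_normal_density) {g. t < \<bar>\<sigma> * g\<bar>} \<le> measure \<mu> {x. t < \<bar>x\<bar>}"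
    using assms(2)
    by (auto simp: super_gaussian_def centered_unit_variance_def real_distribution_def
        real_distribution_axioms_def)
  interpret symmetric_tail_domination \<mu> "centered_normal \<sigma>"
    unfolding symmetric_tail_domination_def symmetric_tail_domination_axioms_def
    using \<open>real_distribution \<mu>\<close> assms(1) tail
    by (simp add: real_distribution_centered_normal symmetric_law_centered_normal
        measure_centered_normal_abs_greater \<open>0 < \<sigma>\<close>)
  have "exp (- (u / \<sigma>)\<^sup>2) / 9 \<le> measure (centered_normal \<sigma>) {x. u < \<bar>x\<bar>}"
    using \<open>0 < \<sigma>\<close> \<open>0 \<le> u\<close> by (rule centered_normal_tail_ge)
  also have "\<dots> = weighted_sum_tail (centered_normal \<sigma>) I w u"
    using assms(3) \<open>0 < \<sigma>\<close> assms(4) by (rule weighted_sum_tail_centered_normal[symmetric])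
  also have "\<dots> \<le> 2 * weighted_sum_tail \<mu> I w u"
    using assms(3,5) by (rule prob_weighted_sum_tail_le)
  finally show ?thesis by simp
qed

theorem lemma4p8:
  shows "\<exists>c1>0. \<exists>c2>0. \<forall>(m::nat) (\<mu>::real measure) (\<sigma>::real).
     m > 0 \<and> symmetric_law \<mu> \<and> super_gaussian \<mu> \<sigma> \<longrightarrow>
     (\<forall>u (w::nat \<Rightarrow> real). u \<ge> \<sigma> / 4 \<and> (\<Sum>i<m. (w i)^2) = 1 \<longrightarrow>
        measure (PiM {..<m} (\<lambda>_. \<mu>)) {b \<in> space (PiM {..<m} (\<lambda>_. \<mu>)). \<bar>\<Sum>i<m. b i * w i\<bar> > u}
          > c1 * exp (- (c2 * u^2) / (2 * \<sigma>^2)))"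
proof (rule exI[of _ "1 / 20"], intro conjI exI[of _ 2] allI impI)
  fix m :: nat and \<mu> :: "real measure" and \<sigma> u :: real and w :: "nat \<Rightarrow> real"
  assume "0 < m \<and> symmetric_law \<mu> \<and> super_gaussian \<mu> \<sigma>" and "\<sigma> / 4 \<le> u \<and> (\<Sum>i<m. (w i)\<^sup>2) = 1"
  then have \<mu>: "symmetric_law \<mu>" "super_gaussian \<mu> \<sigma>" and w: "(\<Sum>i<m. (w i)\<^sup>2) = 1"
    and "0 \<le> u"
    by (auto simp: super_gaussian_def)
  have "exp (- (2 * u\<^sup>2) / (2 * \<sigma>\<^sup>2)) = exp (- (u / \<sigma>)\<^sup>2)"
    by (simp add: power_divide)
  then show "1 / 20 * exp (- (2 * u\<^sup>2) / (2 * \<sigma>\<^sup>2)) < weighted_sum_tail \<mu> {..<m} w u"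
    using super_gaussian_weighted_sum_tail_ge[OF \<mu> finite_lessThan w \<open>0 \<le> u\<close>]
      exp_gt_zero[of "- (u / \<sigma>)\<^sup>2"]
    by linarith
qed simp_all

end
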